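(* Consider a power allocation game (PAG) as described in the context. Let $\mathbf n_0\subseteq\mathbf n$ be a nonempty set of countries such that for every $i\in\mathbf n_0$, $$\mathcal A_i\cap\mathbf n_0=\emptyset\qquad\text{and}\qquad p_i\ \ge\ \sum_{j\in\mathcal A_i}p_j .$$ Then for every Nash equilibrium $U^*\in\mathcal U^*$ and every $i\in\mathbf n_0$ we have $\sigma_i(U^* )\ge\tau_i(U^* )$, i.e. every country in $\mathbf n_0$ survives at every Nash equilibrium.
   Context: Power allocation game (PAG). There are $n$ countries labelled by $\mathbf n=\{1,\dots,n\}$; country $i$ has total power $p_i\ge 0$. Each country $i$ has a set of friends $\mathcal F_i\subseteq\mathbf n$ and a set of adversaries $\mathcal A_i\subseteq\mathbf n$; the sets $\{i\}$, $\mathcal F_i$, $\mathcal A_i$ are pairwise disjoint, and the relations are symmetric ($j\in\mathcal F_i\iff i\in\mathcal F_j$, $j\in\mathcal A_i\iff i\in\mathcal A_j$). An admissible power allocation matrix is a real $n\times n$ matrix $U=[u_{ij}]$ with $u_{ij}\ge0$, $u_{ij}=0$ whenever $j\notin\{i\}\cup\mathcal F_i\cup\mathcal A_i$, and $\sum_{j=1}^n u_{ij}=p_i$ for every $i$. Row $i$ is country $i$'s strategy: $u_{ii}$ is power kept in reserve, $u_{ij}$ ($j\in\mathcal F_i$) is support given to friend $j$, $u_{ij}$ ($j\in\mathcal A_i$) is offense against adversary $j$. $\mathcal U$ is the set of admissible matrices. The support of $i$ is $\sigma_i(U)=u_{ii}+\sum_{j\in\mathcal F_i}u_{ji}+\sum_{j\in\mathcal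 A_i}u_{ij}$ and the threat to $i$ is $\tau_i(U)=\sum_{j\in\mathcal A_i}u_{ji}$. The state $x_i(U)$ is "safe" if $\sigma_i(U)>\tau_i(U)$, "precarious" if $\sigma_i(U)=\tau_i(U)$, "unsafe" if $\sigma_i(U)<\tau_i(U)$; country $i$ survives at $U$ if it is safe or precarious. Preferences. For $U,V\in\mathcal U$, country $i$ weakly prefers $V$ to $U$ (written $U\preceq_i V$) iff (a) for all $j\in\{i\}\cup\mathcal F_i$: $x_j(V)\in\{\text{safe},\text{precarious}\}$ or $x_j(U)=\text{unsafe}$; and (b) for all $j\in\mathcal A_i$: $x_j(V)\in\{\text{unsafe},\text{precarious}\}$ or $x_j(U)=\text{safe}$. Country $i$ strictly prefers $V$ to $U$ (written $U\prec_i V$) iff either $i$ survives at $V$ and is unsafe at $U$ (priority of self-survival), or $U\preceq_i V$ holds and $V\preceq_i U$ fails. Nash equilibrium. $U^*\in\mathcal U$ is a (pure strategy) Nash equilibrium if no country has a profitable unilateral deviation: for every $i\in\mathbf n$ and every $V\in\mathcal U$ differing from $U^*$ only in row $i$, it is not the case that $U^*\prec_i V$. $\mathcal U^*$ denotes the set of Nash equilibria. *)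

theory Defs
  imports Complex_Main
begin

text \<open>An allocation matrix is U :: nat => nat => real
  (row i, column j = u_ij); only entries with indices in {1..n} matter.\<close>

definition countries :: "nat \<Rightarrow> nat set" where
  "countries n = {1..n}"

definition pag :: "nat \<Rightarrow> (nat \<Rightarrow> real) \<Rightarrow> (nat \<Rightarrow> nat set) \<Rightarrow> (nat \<Rightarrow> nat set) \<Rightarrow> bool" where
  "pag n p F A \<longleftrightarrow>
     (\<forall>i\<in>countries n. p i \<ge> 0 \<and> F i \<subseteq> countries n \<and> A i \<subseteq> countries n
        \<and> i \<notin> F i \<and> i \<notin> A i \<and> F i \<inter> A i = {}) \<and>
     (\<forall>i\<in>countries n. \<forall>j\<in>countries n. (j \<in> F i \<longleftrightarrow> i \<in> F j) \<and> (j \<in> A i \<longleftrightarrow> i \<in> A j))"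

definition admissible :: "nat \<Rightarrow> (nat \<Rightarrow> real) \<Rightarrow> (nat \<Rightarrow> nat set) \<Rightarrow> (nat \<Rightarrow> nat set)
    \<Rightarrow> (nat \<Rightarrow> nat \<Rightarrow> real) \<Rightarrow> bool" where
  "admissible n p F A U \<longleftrightarrow>
     (\<forall>i\<in>countries n. \<forall>j\<in>countries n. U i j \<ge> 0) \<and>
     (\<forall>i\<in>countries n. \<forall>j\<in>countries n. j \<notin> {i} \<union> F i \<union> A i \<longrightarrow> U i j = 0) \<and>
     (\<forall>i\<in>countries n. (\<Sum>j\<in>countries n. U i j) = p i)"

definition support :: "(nat \<Rightarrow> nat set) \<Rightarrow> (nat \<Rightarrow> nat set) \<Rightarrow> (nat \<Rightarrow> nat \<Rightarrow> real) \<Rightarrow> nat \<Rightarrow> real" where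
  "support F A U i = U i i + (\<Sum>j\<in>F i. U j i) + (\<Sum>j\<in>A i. U i j)"

definition threat :: "(nat \<Rightarrow> nat set) \<Rightarrow> (nat \<Rightarrow> nat \<Rightarrow> real) \<Rightarrow> nat \<Rightarrow> real" where
  "threat A U i = (\<Sum>j\<in>A i. U j i)"

datatype state = Safe | Precarious | Unsafe

definition st :: "(nat \<Rightarrow> nat set) \<Rightarrow> (nat \<Rightarrow> nat set) \<Rightarrow> (nat \<Rightarrow> nat \<Rightarrow> real) \<Rightarrow> nat \<Rightarrow> state" where
  "st F A U i = (if support F A U i > threat A U i then Safe
                 else if support F A U i = threat A U i then Precarious else Unsafe)"

definition survives :: "(nat \<Rightarrow> nat set) \<Rightarrow> (nat \<Rightarrow> nat set) \<Rightarrow> (nat \<Rightarrow> nat \<Rightarrow> real) \<Rightarrow> nat \<Rightarrow> bool" where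
  "survives F A U i \<longleftrightarrow> st F A U i \<in> {Safe, Precarious}"

definition weak_pref :: "(nat \<Rightarrow> nat set) \<Rightarrow> (nat \<Rightarrow> nat set) \<Rightarrow> nat
    \<Rightarrow> (nat \<Rightarrow> nat \<Rightarrow> real) \<Rightarrow> (nat \<Rightarrow> nat \<Rightarrow> real) \<Rightarrow> bool" where
  "weak_pref F A i U V \<longleftrightarrow>
     (\<forall>j\<in>{i} \<union> F i. st F A V j \<in> {Safe, Precarious} \<or> st F A U j = Unsafe) \<and>
     (\<forall>j\<in>A i. st F A V j \<in> {Unsafe, Precarious} \<or> st F A U j = Safe)"

definition strict_pref :: "(nat \<Rightarrow> nat set) \<Rightarrow> (nat \<Rightarrow> nat set) \<Rightarrow> nat
    \<Rightarrow> (nat \<Rightarrow> nat \<Rightarrow> real) \<Rightarrow> (nat \<Rightarrow> nat \<Rightarrow> real) \<Rightarrow> bool" where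
  "strict_pref F A i U V \<longleftrightarrow>
     (survives F A V i \<and> st F A U i = Unsafe) \<or>
     (weak_pref F A i U V \<and> \<not> weak_pref F A i V U)"

text \<open>Pure Nash equilibrium. "V differs from U only in row i" is read on the
  n x n matrix, i.e. on indices in {1..n}.\<close>
definition nash_eq :: "nat \<Rightarrow> (nat \<Rightarrow> real) \<Rightarrow> (nat \<Rightarrow> nat set) \<Rightarrow> (nat \<Rightarrow> nat set)
    \<Rightarrow> (nat \<Rightarrow> nat \<Rightarrow> real) \<Rightarrow> bool" where
  "nash_eq n p F A U \<longleftrightarrow> admissible n p F A U \<and>
     (\<forall>i\<in>countries n. \<forall>V. admissible n p F A V \<and>
        (\<forall>k\<in>countries n. \<forall>j\<in>countries n. k \<noteq> i \<longrightarrow> V k j = U k j)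
        \<longrightarrow> \<not> strict_pref F A i U V)"

end

theory Submission
  imports Defs
begin

text \<open>Keeping all of its power in reserve is always admissible for a country, leaves the
  threat against it unchanged, and gives it support at least its total power. So a country
  whose power is at least its adversaries' combined power can always secure its survival
  unilaterally; at a Nash equilibrium it therefore cannot be unsafe, since otherwise this
  deviation would be strictly preferred by the priority of self-survival.\<close>

lemma admissible_entry_le_power:
  assumes "admissible n p F A U" and "j \<in> countries n" and "k \<in> countries n"
  shows "U j k \<le> p j"
proof -
  have "U j k = (\<Sum>m\<in>{k}. U j m)" by simp
  also have "\<dots> \<le> (\<Sum>m\<in>countries n. U j m)"
    using assms by (intro sum_mono2) (auto simp: countries_def admissible_def)
  also have "\<dots> = p j" using assms by (simp add: admissible_def)
  finally show ?thesis .
qed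

lemma threat_le_adversary_power:
  assumes "pag n p F A" and "admissible n p F A U" and "i \<in> countries n"
  shows "threat A U i \<le> (\<Sum>j\<in>A i. p j)"
proof -
  have "A i \<subseteq> countries n" using assms(1,3) by (simp add: pag_def)
  then show ?thesis
    unfolding threat_def using assms(2,3) by (intro sum_mono) (auto intro: admissible_entry_le_power)
qed

definition keep_in_reserve :: "(nat \<Rightarrow> real) \<Rightarrow> nat \<Rightarrow> (nat \<Rightarrow> nat \<Rightarrow> real) \<Rightarrow> nat \<Rightarrow> nat \<Rightarrow> real" where
  "keep_in_reserve p i U = (\<lambda>k j. if k = i then (if j = i then p i else 0) else U k j)"

lemma admissible_keep_in_reserve:
  assumes "pag n p F A" and "admissible n p F A U" and "i \<in> countries n"
  shows "admissible n p F A (keep_in_reserve p i U)"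
proof -
  have "p i \<ge> 0" using assms(1,3) by (simp add: pag_def)
  moreover have "(\<Sum>j\<in>countries n. if j = i then p i else 0) = p i"
    using assms(3) by (simp add: countries_def)
  moreover have "(\<Sum>j\<in>countries n. keep_in_reserve p i U k j) = p k" if "k \<in> countries n" for k
    using calculation assms(2) that
    by (cases "k = i") (auto simp: keep_in_reserve_def admissible_def)
  ultimately show ?thesis
    using assms(2) unfolding admissible_def keep_in_reserve_def by auto
qed

lemma keep_in_reserve_other_rows:
  "k \<noteq> i \<Longrightarrow> keep_in_reserve p i U k j = U k j"
  by (simp add: keep_in_reserve_def)

lemma threat_keep_in_reserve:
  assumes "i \<notin> A i"
  shows "threat A (keep_in_reserve p i U) i = threat A U i"
  unfolding threat_def keep_in_reserve_def using assms by (intro sum.cong) auto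

lemma support_keep_in_reserve_ge_power:
  assumes "pag n p F A" and "admissible n p F A U" and "i \<in> countries n"
  shows "support F A (keep_in_reserve p i U) i \<ge> p i"
proof -
  have friends: "F i \<subseteq> countries n" "i \<notin> F i" and "i \<notin> A i"
    using assms(1,3) by (auto simp: pag_def)
  then have "(\<Sum>j\<in>A i. keep_in_reserve p i U i j) = 0"
    by (auto simp: keep_in_reserve_def intro: sum.neutral)
  moreover have "(\<Sum>j\<in>F i. keep_in_reserve p i U j i) \<ge> 0"
    using friends assms(2,3)
    by (intro sum_nonneg) (auto simp: keep_in_reserve_def admissible_def)
  ultimately show ?thesis
    unfolding support_def by (simp add: keep_in_reserve_def)
qed

lemma nash_eq_survives_if_power_covers_threat:
  assumes "pag n p F A" and "nash_eq n p F A U" and "i \<in> countries n"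
    and "threat A U i \<le> p i"
  shows "support F A U i \<ge> threat A U i"
proof (rule ccontr)
  assume "\<not> support F A U i \<ge> threat A U i"
  then have "st F A U i = Unsafe" by (simp add: st_def)
  have adm: "admissible n p F A U" using assms(2) by (simp add: nash_eq_def)
  let ?V = "keep_in_reserve p i U"
  have "i \<notin> A i" using assms(1,3) by (simp add: pag_def)
  then have "survives F A ?V i"
    using support_keep_in_reserve_ge_power[OF assms(1) adm assms(3)] assms(4)
    by (auto simp: survives_def st_def threat_keep_in_reserve)
  with \<open>st F A U i = Unsafe\<close> have "strict_pref F A i U ?V"
    by (simp add: strict_pref_def)
  moreover have "admissible n p F A ?V"
    using admissible_keep_in_reserve[OF assms(1) adm assms(3)] .
  ultimately show False
    using assms(2,3) by (auto simp: nash_eq_def keep_in_reserve_other_rows)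
qed

theorem theorem1:
  fixes n :: nat and p :: "nat \<Rightarrow> real" and F A :: "nat \<Rightarrow> nat set"
    and n0 :: "nat set" and U :: "nat \<Rightarrow> nat \<Rightarrow> real" and i :: nat
  assumes "pag n p F A"
    and "n0 \<subseteq> countries n" and "n0 \<noteq> {}"
    and "\<forall>k\<in>n0. A k \<inter> n0 = {} \<and> p k \<ge> (\<Sum>j\<in>A k. p j)"
    and "nash_eq n p F A U"
    and "i \<in> n0"
  shows "support F A U i \<ge> threat A U i"
proof -
  have i: "i \<in> countries n" using assms(2,6) by blast
  have "threat A U i \<le> (\<Sum>j\<in>A i. p j)"
    using assms(5) by (intro threat_le_adversary_power[OF assms(1) _ i]) (simp add: nash_eq_def)
  also have "\<dots> \<le> p i" using assms(4,6) by blast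
  finally show ?thesis
    using nash_eq_survives_if_power_covers_threat[OF assms(1,5) i] by blast
qed

end
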